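(* Let $\mathcal{X}\subseteq\mathbb{R}^d$, $\sigma,\varepsilon>0$, and $\mathcal{H}\subseteq\{-1,+1\}^{\mathbb{R}^d}$. Then the online learner described below (Algorithm 2) guarantees, for every $T$ and every sequence $(x_1,y_1),\dots,(x_T,y_T)\in\mathcal{X}\times\{-1,+1\}$, $$\sum_{t=1}^T\mathbb{E}\,\mathbb{1}[\hat y_t\neq y_t]-\mathsf{OPT}^{\sigma,\varepsilon}_{\mathrm{gauss}}\le\sqrt{T\cdot\mathsf{vc}(\mathcal{H})\ln\!\left(\frac{c\,e\,\left|\mathsf{C}\!\left(\mathcal{X},\|\cdot\|_2,\sqrt{\pi/32}\,\sigma\varepsilon\right)\right|}{\varepsilon^2}\right)},$$ where $c>0$ is an absolute constant and $\mathsf{OPT}^{\sigma,\varepsilon}_{\mathrm{gauss}}=\min_{h\in\mathcal{H}}\sum_{t=1}^T\mathbb{1}\!\left[y_t\,\mathbb{E}_{z\sim\mathcal{N}(0,I_d)}[h(x_t+\sigma z)]\le\varepsilon\right]$.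
   Context: Online binary classification: on rounds $t=1,\dots,T$ the adversary reveals $x_t$, the (possibly randomized) learner outputs $\hat y_t\in\{-1,+1\}$, then $y_t\in\{-1,+1\}$ is revealed; the expectation is over the learner's randomness. $\mathsf{vc}$ is the VC dimension. A $\gamma$-cover of $\mathcal{X}$ w.r.t. $\|\cdot\|_2$ is a set $\mathcal{Z}\subseteq\mathcal{X}$ with every $x\in\mathcal{X}$ within $\ell_2$-distance $\gamma$ of some element of $\mathcal{Z}$; $\mathsf{C}(\mathcal{X},\|\cdot\|_2,\gamma)$ denotes one of minimal cardinality. Algorithm 2: set $\tilde\varepsilon=\varepsilon/4$ and $\gamma=\sigma\tilde\varepsilon/\sqrt{2/\pi}$ $(=\sqrt{\pi/32}\,\sigma\varepsilon)$. Let $\mathcal{Z}=\mathsf{C}(\mathcal{X},\|\cdot\|_2,\gamma)$ and fix $\phi:\mathcal{X}\to\mathcal{Z}$ with $\|x-\phi(x)\|_2\le\gamma$. For each $\tilde x\in\mathcal{Z}$ fix points $z_1,\dots,z_M\in\mathbb{R}^d$ (depending on $\tilde x$), with $M=O(\mathsf{vc}(\mathcal{H})/\tilde\varepsilon^2)$, such that for all $y\in\{\pm1\}$ and $h\in\mathcal{H}$, $\left|\Pr_{z\sim\mathcal{N}(0,I_d)}[h(\tilde x+\sigma z)=y]-\frac1M\sum_{i=1}^M\mathbb{1}[h(\tilde x+\sigma z_i)=y]\right|\le\tilde\varepsilon$. Let $\mathcal{S}=\bigcup_{\tilde x\in\mathcal{Z}}\{\tilde x+\sigma z_1,\dots,\tilde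 x+\sigma z_M\}$ and $\mathcal{H}|_{\mathcal{S}}$ the restrictions of $\mathcal{H}$ to $\mathcal{S}$. Initialize $P_1$ uniform on $\mathcal{H}|_{\mathcal{S}}$, $\eta=\sqrt{8\ln|\mathcal{H}|_{\mathcal{S}}|/T}$. At round $t$, let $\tilde x_t=\phi(x_t)$, draw $h\sim P_t$, and predict $\hat y_t=+1$ if $\frac1M\sum_{i=1}^M\mathbb{1}[h(\tilde x_t+\sigma z_i)=+1]\ge\frac12$, else $-1$; after $y_t$ is revealed set $P_{t+1}(h)\propto P_t(h)\exp\!\left(-\eta\,\mathbb{1}\!\left[\frac1M\sum_{i=1}^M\mathbb{1}[h(\tilde x_t+\sigma z_i)\neq y_t]\ge\frac12\right]\right)$. *)

theory Defs
  imports "HOL-Probability.Probability"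
begin

(* R^d is represented by functions nat => real vanishing at coordinates >= d *)
definition Rd :: "nat \<Rightarrow> (nat \<Rightarrow> real) set" where
  "Rd d = {x. \<forall>i\<ge>d. x i = 0}"

definition l2norm :: "nat \<Rightarrow> (nat \<Rightarrow> real) \<Rightarrow> real" where
  "l2norm d x = sqrt (\<Sum>i<d. (x i)\<^sup>2)"

definition l2dist :: "nat \<Rightarrow> (nat \<Rightarrow> real) \<Rightarrow> (nat \<Rightarrow> real) \<Rightarrow> real" where
  "l2dist d x x' = l2norm d (\<lambda>i. x i - x' i)"

definition shift :: "(nat \<Rightarrow> real) \<Rightarrow> real \<Rightarrow> (nat \<Rightarrow> real) \<Rightarrow> (nat \<Rightarrow> real)" where
  "shift x s z = (\<lambda>i. x i + s * z i)"

definition is_cover :: "nat \<Rightarrow> (nat \<Rightarrow> real) set \<Rightarrow> real \<Rightarrow> (nat \<Rightarrow> real) set \<Rightarrow> bool" where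
  "is_cover d X \<gamma> Z \<longleftrightarrow> Z \<subseteq> X \<and> (\<forall>x\<in>X. \<exists>z\<in>Z. l2dist d x z \<le> \<gamma>)"

definition covering_number :: "nat \<Rightarrow> (nat \<Rightarrow> real) set \<Rightarrow> real \<Rightarrow> nat" where
  "covering_number d X \<gamma> = (LEAST k. \<exists>Z. finite Z \<and> is_cover d X \<gamma> Z \<and> card Z = k)"

definition std_gauss :: "nat \<Rightarrow> (nat \<Rightarrow> real) measure" where
  "std_gauss d = PiM {..<d} (\<lambda>_. std_normal_distribution)"

definition ext :: "nat \<Rightarrow> (nat \<Rightarrow> real) \<Rightarrow> (nat \<Rightarrow> real)" where
  "ext d z = (\<lambda>i. if i < d then z i else 0)"

definition gauss_prob :: "nat \<Rightarrow> real \<Rightarrow> ((nat \<Rightarrow> real) \<Rightarrow> real) \<Rightarrow> (nat \<Rightarrow> real) \<Rightarrow> real \<Rightarrow> real" where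
  "gauss_prob d \<sigma> h x y = measure (std_gauss d) {z \<in> space (std_gauss d). h (shift x \<sigma> (ext d z)) = y}"

definition gauss_exp :: "nat \<Rightarrow> real \<Rightarrow> ((nat \<Rightarrow> real) \<Rightarrow> real) \<Rightarrow> (nat \<Rightarrow> real) \<Rightarrow> real" where
  "gauss_exp d \<sigma> h x = (\<integral>z. h (shift x \<sigma> (ext d z)) \<partial>std_gauss d)"

definition shatters :: "((nat \<Rightarrow> real) \<Rightarrow> real) set \<Rightarrow> (nat \<Rightarrow> real) set \<Rightarrow> bool" where
  "shatters H A \<longleftrightarrow> (\<forall>B\<subseteq>A. \<exists>h\<in>H. \<forall>a\<in>A. (h a = 1 \<longleftrightarrow> a \<in> B))"

definition finite_vc :: "nat \<Rightarrow> ((nat \<Rightarrow> real) \<Rightarrow> real) set \<Rightarrow> bool" where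
  "finite_vc d H \<longleftrightarrow> (\<exists>n. \<forall>A. finite A \<and> A \<subseteq> Rd d \<and> shatters H A \<longrightarrow> card A \<le> n)"

definition vc_dim :: "nat \<Rightarrow> ((nat \<Rightarrow> real) \<Rightarrow> real) set \<Rightarrow> nat" where
  "vc_dim d H = Sup {card A | A. finite A \<and> A \<subseteq> Rd d \<and> shatters H A}"

(* OPT^{sigma,eps}_gauss, rounds indexed t = 0..T-1 *)
definition opt_gauss :: "nat \<Rightarrow> real \<Rightarrow> real \<Rightarrow> ((nat \<Rightarrow> real) \<Rightarrow> real) set \<Rightarrow> nat
    \<Rightarrow> (nat \<Rightarrow> nat \<Rightarrow> real) \<Rightarrow> (nat \<Rightarrow> real) \<Rightarrow> real" where
  "opt_gauss d \<sigma> \<epsilon> H T x y =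
     real (Min ((\<lambda>h. card {t\<in>{..<T}. y t * gauss_exp d \<sigma> h (x t) \<le> \<epsilon>}) ` H))"

definition alg2_eps :: "real \<Rightarrow> real" where
  "alg2_eps \<epsilon> = \<epsilon> / 4"

definition alg2_gamma :: "real \<Rightarrow> real \<Rightarrow> real" where
  "alg2_gamma \<sigma> \<epsilon> = \<sigma> * alg2_eps \<epsilon> / sqrt (2 / pi)"

(* the admissible choices of Z, phi, M, z_1..z_M (z-points indexed 0..M-1) *)
definition alg2_setup :: "nat \<Rightarrow> (nat \<Rightarrow> real) set \<Rightarrow> real \<Rightarrow> real \<Rightarrow> ((nat \<Rightarrow> real) \<Rightarrow> real) set
    \<Rightarrow> (nat \<Rightarrow> real) set \<Rightarrow> ((nat \<Rightarrow> real) \<Rightarrow> (nat \<Rightarrow> real)) \<Rightarrow> nat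
    \<Rightarrow> ((nat \<Rightarrow> real) \<Rightarrow> nat \<Rightarrow> (nat \<Rightarrow> real)) \<Rightarrow> bool" where
  "alg2_setup d X \<sigma> \<epsilon> H Z \<phi> M zs \<longleftrightarrow>
     finite Z \<and> is_cover d X (alg2_gamma \<sigma> \<epsilon>) Z \<and>
     (\<forall>Z'. finite Z' \<and> is_cover d X (alg2_gamma \<sigma> \<epsilon>) Z' \<longrightarrow> card Z \<le> card Z') \<and>
     (\<forall>x\<in>X. \<phi> x \<in> Z \<and> l2dist d x (\<phi> x) \<le> alg2_gamma \<sigma> \<epsilon>) \<and>
     M \<ge> 1 \<and>
     (\<forall>xt\<in>Z. \<forall>i<M. zs xt i \<in> Rd d) \<and>
     (\<forall>xt\<in>Z. \<forall>y\<in>{-1, 1}. \<forall>h\<in>H.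
        \<bar>gauss_prob d \<sigma> h xt y
          - (1 / real M) * (\<Sum>i<M. if h (shift xt \<sigma> (zs xt i)) = y then 1 else 0)\<bar>
        \<le> alg2_eps \<epsilon>)"

definition alg2_S :: "(nat \<Rightarrow> real) set \<Rightarrow> real \<Rightarrow> nat \<Rightarrow> ((nat \<Rightarrow> real) \<Rightarrow> nat \<Rightarrow> (nat \<Rightarrow> real))
    \<Rightarrow> (nat \<Rightarrow> real) set" where
  "alg2_S Z \<sigma> M zs = (\<Union>xt\<in>Z. {shift xt \<sigma> (zs xt i) | i. i < M})"

definition restr_class :: "((nat \<Rightarrow> real) \<Rightarrow> real) set \<Rightarrow> (nat \<Rightarrow> real) set \<Rightarrow> ((nat \<Rightarrow> real) \<Rightarrow> real) set" where
  "restr_class H S = (\<lambda>h. restrict h S) ` H"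

definition alg2_pred :: "real \<Rightarrow> nat \<Rightarrow> ((nat \<Rightarrow> real) \<Rightarrow> nat \<Rightarrow> (nat \<Rightarrow> real))
    \<Rightarrow> ((nat \<Rightarrow> real) \<Rightarrow> real) \<Rightarrow> (nat \<Rightarrow> real) \<Rightarrow> real" where
  "alg2_pred \<sigma> M zs h xt =
     (if (1 / real M) * (\<Sum>i<M. if h (shift xt \<sigma> (zs xt i)) = 1 then 1 else 0) \<ge> 1 / 2
      then 1 else -1)"

definition alg2_loss :: "real \<Rightarrow> nat \<Rightarrow> ((nat \<Rightarrow> real) \<Rightarrow> nat \<Rightarrow> (nat \<Rightarrow> real))
    \<Rightarrow> ((nat \<Rightarrow> real) \<Rightarrow> real) \<Rightarrow> (nat \<Rightarrow> real) \<Rightarrow> real \<Rightarrow> real" where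
  "alg2_loss \<sigma> M zs h xt y =
     (if (1 / real M) * (\<Sum>i<M. if h (shift xt \<sigma> (zs xt i)) \<noteq> y then 1 else 0) \<ge> 1 / 2
      then 1 else 0)"

(* exponential weights: P_{t+1} (0-indexed: hedge ... t) *)
primrec hedge :: "'g set \<Rightarrow> real \<Rightarrow> (nat \<Rightarrow> 'g \<Rightarrow> real) \<Rightarrow> nat \<Rightarrow> 'g \<Rightarrow> real" where
  "hedge G \<eta> L 0 g = 1 / real (card G)"
| "hedge G \<eta> L (Suc t) g =
     hedge G \<eta> L t g * exp (- \<eta> * L t g) / (\<Sum>g'\<in>G. hedge G \<eta> L t g' * exp (- \<eta> * L t g'))"

(* sum_{t=1}^T E 1[yhat_t \<noteq> y_t] for Algorithm 2 (rounds indexed 0..T-1) *)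
definition alg2_expected_mistakes :: "real \<Rightarrow> ((nat \<Rightarrow> real) \<Rightarrow> real) set
    \<Rightarrow> (nat \<Rightarrow> real) set \<Rightarrow> ((nat \<Rightarrow> real) \<Rightarrow> (nat \<Rightarrow> real)) \<Rightarrow> nat
    \<Rightarrow> ((nat \<Rightarrow> real) \<Rightarrow> nat \<Rightarrow> (nat \<Rightarrow> real)) \<Rightarrow> nat \<Rightarrow> (nat \<Rightarrow> nat \<Rightarrow> real) \<Rightarrow> (nat \<Rightarrow> real) \<Rightarrow> real" where
  "alg2_expected_mistakes \<sigma> H Z \<phi> M zs T x y =
     (let G = restr_class H (alg2_S Z \<sigma> M zs);
          \<eta> = sqrt (8 * ln (real (card G)) / real T);
          L = (\<lambda>t h. alg2_loss \<sigma> M zs h (\<phi> (x t)) (y t));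
          P = hedge G \<eta> L
      in (\<Sum>t<T. \<Sum>h\<in>G. P t h * (if alg2_pred \<sigma> M zs h (\<phi> (x t)) \<noteq> y t then 1 else 0)))"

end

theory Submission
  imports Defs
begin

(*
  Let x' be the cover point of x, at distance at most gamma. The law of x + sigma z has density L
  with respect to that of x' + sigma z, and E (L - 1)^2 = exp (|x - x'|^2 / sigma^2) - 1, so the
  Gaussian smoothings of a [-1, 1]-valued h at x and at x' differ by at most
  sqrt (exp (gamma^2 / sigma^2) - 1) <= eps / 2.  Hence a hypothesis whose margin at x_t exceeds eps
  agrees with y_t with probability more than 1/2 + eps/4 around x'_t, the eps/4-accurate sample
  z_1 .. z_M sees a majority for y_t, and its restriction to S has loss 0 in that round: the best
  expert of H|S suffers at most OPT losses.  Exponential weights over the finite class H|S has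
  regret sqrt (T ln |H|S| / 2), each mistake of the majority vote is a loss, and by Pajor's form
  of the Sauer--Shelah lemma |H|S| <= (e |S| / vc)^vc with |S| <= |Z| M.
*)

section \<open>Gaussian translates\<close>

definition normal_likelihood_ratio :: "real \<Rightarrow> real \<Rightarrow> real" where
  "normal_likelihood_ratio a t = exp (a * t - a\<^sup>2 / 2)"

lemma normal_likelihood_ratio_pos: "normal_likelihood_ratio a t > 0"
  by (simp add: normal_likelihood_ratio_def)

lemma std_normal_density_mult_likelihood_ratio:
  "std_normal_density t * normal_likelihood_ratio a t = normal_density a 1 t"
proof -
  have "exp (- t\<^sup>2 / 2) * exp (a * t - a\<^sup>2 / 2) = exp (- (t - a)\<^sup>2 / 2)"
    by (simp add: exp_add[symmetric] power2_eq_square algebra_simps)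
  then show ?thesis
    unfolding normal_density_def normal_likelihood_ratio_def by simp
qed

lemma emeasure_std_normal_translate:
  assumes A: "A \<in> sets borel"
  shows "emeasure std_normal_distribution {t. t + a \<in> A} =
    emeasure (density lborel (normal_density a 1)) A"
proof -
  have "emeasure std_normal_distribution {t. t + a \<in> A} =
      (\<integral>\<^sup>+t. ennreal (std_normal_density t) * indicator {t. t + a \<in> A} t \<partial>lborel)"
    using A by (subst emeasure_density) (auto simp: mult.commute)
  also have "\<dots> = (\<integral>\<^sup>+t. ennreal (normal_density a 1 (a + 1 * t)) * indicator A (a + 1 * t) \<partial>lborel)"
    by (intro nn_integral_cong) (auto simp: normal_density_def indicator_def add.commute)
  also have "\<dots> = (\<integral>\<^sup>+t. ennreal (normal_density a 1 t) * indicator A t \<partial>lborel)"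
    using A by (subst nn_integral_real_affine[of _ 1 a]) auto
  also have "\<dots> = emeasure (density lborel (normal_density a 1)) A"
    using A by (subst emeasure_density) (auto simp: mult.commute)
  finally show ?thesis .
qed

lemma nn_integral_likelihood_ratio_times:
  assumes "f \<in> borel_measurable borel"
  shows "(\<integral>\<^sup>+t. ennreal (normal_likelihood_ratio a t) * f t \<partial>std_normal_distribution) =
    (\<integral>\<^sup>+t. ennreal (normal_density a 1 t) * f t \<partial>lborel)"
proof -
  have "(\<integral>\<^sup>+t. ennreal (normal_likelihood_ratio a t) * f t \<partial>std_normal_distribution) =
      (\<integral>\<^sup>+t. ennreal (std_normal_density t) * (ennreal (normal_likelihood_ratio a t) * f t) \<partial>lborel)"
    using assms by (subst nn_integral_density) (auto simp: normal_likelihood_ratio_def)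
  also have "\<dots> = (\<integral>\<^sup>+t. ennreal (normal_density a 1 t) * f t \<partial>lborel)"
    by (intro nn_integral_cong)
      (simp add: mult.assoc[symmetric] ennreal_mult[symmetric] std_normal_density_mult_likelihood_ratio
        less_imp_le[OF normal_likelihood_ratio_pos])
  finally show ?thesis .
qed

lemma nn_integral_likelihood_ratio_sq:
  "(\<integral>\<^sup>+t. ennreal ((normal_likelihood_ratio a t)\<^sup>2) \<partial>std_normal_distribution) = ennreal (exp (a\<^sup>2))"
proof -
  have sq: "(normal_likelihood_ratio a t)\<^sup>2 = exp (a\<^sup>2) * normal_likelihood_ratio (2 * a) t" for t
    by (simp add: normal_likelihood_ratio_def power2_eq_square exp_add[symmetric] algebra_simps)
  have "(\<integral>\<^sup>+t. ennreal ((normal_likelihood_ratio a t)\<^sup>2) \<partial>std_normal_distribution) =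
      (\<integral>\<^sup>+t. ennreal (normal_likelihood_ratio (2 * a) t) * ennreal (exp (a\<^sup>2)) \<partial>std_normal_distribution)"
    by (simp add: sq ennreal_mult less_imp_le[OF normal_likelihood_ratio_pos] mult.commute)
  also have "\<dots> = (\<integral>\<^sup>+t. ennreal (normal_density (2 * a) 1 t) * ennreal (exp (a\<^sup>2)) \<partial>lborel)"
    by (rule nn_integral_likelihood_ratio_times) simp
  also have "\<dots> = ennreal (exp (a\<^sup>2))"
    by (simp add: nn_integral_multc nn_integral_eq_integral)
  finally show ?thesis .
qed

definition std_gauss_on :: "'i set \<Rightarrow> ('i \<Rightarrow> real) measure" where
  "std_gauss_on I = PiM I (\<lambda>_. std_normal_distribution)"

definition shifted_gauss_on :: "'i set \<Rightarrow> ('i \<Rightarrow> real) \<Rightarrow> ('i \<Rightarrow> real) measure" where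
  "shifted_gauss_on I v = PiM I (\<lambda>i. density lborel (normal_density (v i) 1))"

definition translate_on :: "'i set \<Rightarrow> ('i \<Rightarrow> real) \<Rightarrow> ('i \<Rightarrow> real) \<Rightarrow> ('i \<Rightarrow> real)" where
  "translate_on I v z = (\<lambda>i\<in>I. z i + v i)"

definition gauss_likelihood_ratio :: "'i set \<Rightarrow> ('i \<Rightarrow> real) \<Rightarrow> ('i \<Rightarrow> real) \<Rightarrow> real" where
  "gauss_likelihood_ratio I v z = (\<Prod>i\<in>I. normal_likelihood_ratio (v i) (z i))"

lemma product_prob_space_std_normal: "product_prob_space (\<lambda>_. std_normal_distribution)"
  by (intro product_prob_spaceI) (simp add: prob_space_normal_density)

lemma product_prob_space_shifted_normal:
  "product_prob_space (\<lambda>i. density lborel (normal_density (v i) 1))"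
  by (intro product_prob_spaceI) (simp add: prob_space_normal_density)

lemma prob_space_std_gauss_on: "prob_space (std_gauss_on I)"
  unfolding std_gauss_on_def by (intro prob_space_PiM) (simp add: prob_space_normal_density)

lemma space_std_gauss_on: "space (std_gauss_on I) = PiE I (\<lambda>_. UNIV)"
  by (simp add: std_gauss_on_def space_PiM)

lemma sets_std_gauss_on: "sets (std_gauss_on I) = sets (PiM I (\<lambda>_. borel))"
  unfolding std_gauss_on_def by (intro sets_PiM_cong) auto

lemma sets_shifted_gauss_on: "sets (shifted_gauss_on I v) = sets (PiM I (\<lambda>_. borel))"
  unfolding shifted_gauss_on_def by (intro sets_PiM_cong) auto

lemma measurable_translate_on:
  "translate_on I v \<in> measurable (std_gauss_on I) (shifted_gauss_on I v)"
  unfolding translate_on_def measurable_cong_sets[OF sets_std_gauss_on sets_shifted_gauss_on]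
  by (intro measurable_restrict) measurable

lemma borel_measurable_gauss_likelihood_ratio[measurable]:
  "gauss_likelihood_ratio I v \<in> borel_measurable (std_gauss_on I)"
  unfolding gauss_likelihood_ratio_def normal_likelihood_ratio_def
    measurable_cong_sets[OF sets_std_gauss_on refl]
  by (intro borel_measurable_prod) measurable

lemma gauss_likelihood_ratio_pos: "gauss_likelihood_ratio I v z > 0"
  unfolding gauss_likelihood_ratio_def by (intro prod_pos) (simp add: normal_likelihood_ratio_pos)

lemma distr_translate_std_gauss_on:
  assumes I: "finite I"
  shows "distr (std_gauss_on I) (shifted_gauss_on I v) (translate_on I v) = shifted_gauss_on I v"
proof -
  interpret P: product_prob_space "\<lambda>i. density lborel (normal_density (v i) 1)"
    by (rule product_prob_space_shifted_normal)
  interpret Q: product_prob_space "\<lambda>_. std_normal_distribution"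
    by (rule product_prob_space_std_normal)
  show ?thesis
  proof (rule P.PiM_eqI[OF I, folded shifted_gauss_on_def])
    fix A assume A: "\<And>i. i \<in> I \<Longrightarrow> A i \<in> sets (density lborel (normal_density (v i) 1))"
    have "translate_on I v -` PiE I A \<inter> space (std_gauss_on I) = PiE I (\<lambda>i. {t. t + v i \<in> A i})"
      by (auto simp: translate_on_def space_std_gauss_on PiE_iff)
    then have "emeasure (distr (std_gauss_on I) (shifted_gauss_on I v) (translate_on I v)) (PiE I A) =
        emeasure (std_gauss_on I) (PiE I (\<lambda>i. {t. t + v i \<in> A i}))"
      using A I by (subst emeasure_distr[OF measurable_translate_on])
        (auto intro!: sets_PiM_I_finite simp: shifted_gauss_on_def)
    also have "\<dots> = (\<Prod>i\<in>I. emeasure std_normal_distribution {t. t + v i \<in> A i})"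
      unfolding std_gauss_on_def using A I by (subst Q.emeasure_PiM) auto
    also have "\<dots> = (\<Prod>i\<in>I. emeasure (density lborel (normal_density (v i) 1)) (A i))"
      using A by (intro prod.cong refl) (simp add: emeasure_std_normal_translate)
    finally show "emeasure (distr (std_gauss_on I) (shifted_gauss_on I v) (translate_on I v)) (PiE I A) =
        (\<Prod>i\<in>I. emeasure (density lborel (normal_density (v i) 1)) (A i))" .
  qed simp
qed

lemma indicator_PiE_eq_prod:
  assumes "finite I" "z \<in> PiE I (\<lambda>_. UNIV)"
  shows "(indicator (PiE I A) z :: ennreal) = (\<Prod>i\<in>I. indicator (A i) (z i))"
proof (cases "z \<in> PiE I A")
  case False
  with assms obtain i where "i \<in> I" "z i \<notin> A i" by (auto simp: PiE_iff)
  with False assms(1) show ?thesis by (auto intro!: prod_zero[symmetric] bexI[of _ i])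
qed (auto simp: PiE_iff)

lemma density_gauss_likelihood_ratio:
  assumes I: "finite I"
  shows "density (std_gauss_on I) (gauss_likelihood_ratio I v) = shifted_gauss_on I v"
proof -
  interpret P: product_prob_space "\<lambda>i. density lborel (normal_density (v i) 1)"
    by (rule product_prob_space_shifted_normal)
  interpret Q: product_prob_space "\<lambda>_. std_normal_distribution"
    by (rule product_prob_space_std_normal)
  show ?thesis
  proof (rule P.PiM_eqI[OF I, folded shifted_gauss_on_def])
    show "sets (density (std_gauss_on I) (gauss_likelihood_ratio I v)) = sets (shifted_gauss_on I v)"
      by (simp add: sets_std_gauss_on sets_shifted_gauss_on)
  next
    fix A assume A: "\<And>i. i \<in> I \<Longrightarrow> A i \<in> sets (density lborel (normal_density (v i) 1))"
    have "PiE I A \<in> sets (std_gauss_on I)"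
      using A I unfolding sets_std_gauss_on by (auto intro!: sets_PiM_I_finite)
    then have "emeasure (density (std_gauss_on I) (gauss_likelihood_ratio I v)) (PiE I A) =
        (\<integral>\<^sup>+z. ennreal (gauss_likelihood_ratio I v z) * indicator (PiE I A) z \<partial>std_gauss_on I)"
      by (subst emeasure_density) auto
    also have "\<dots> = (\<integral>\<^sup>+z. (\<Prod>i\<in>I. ennreal (normal_likelihood_ratio (v i) (z i)) * indicator (A i) (z i))
        \<partial>std_gauss_on I)"
      using I by (intro nn_integral_cong)
        (simp add: gauss_likelihood_ratio_def prod_ennreal[symmetric] less_imp_le[OF normal_likelihood_ratio_pos]
          indicator_PiE_eq_prod space_std_gauss_on prod.distrib)
    also have "\<dots> = (\<Prod>i\<in>I. \<integral>\<^sup>+t. ennreal (normal_likelihood_ratio (v i) t) * indicator (A i) t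
        \<partial>std_normal_distribution)"
      unfolding std_gauss_on_def using A I
      by (subst Q.product_nn_integral_prod) (auto simp: normal_likelihood_ratio_def)
    also have "\<dots> = (\<Prod>i\<in>I. emeasure (density lborel (normal_density (v i) 1)) (A i))"
      using A by (intro prod.cong refl, subst nn_integral_likelihood_ratio_times)
        (auto simp: emeasure_density mult.commute)
    finally show "emeasure (density (std_gauss_on I) (gauss_likelihood_ratio I v)) (PiE I A) =
        (\<Prod>i\<in>I. emeasure (density lborel (normal_density (v i) 1)) (A i))" .
  qed
qed

context
  fixes I :: "'i set" and v :: "'i \<Rightarrow> real"
  assumes I: "finite I"
begin

interpretation prob_space "std_gauss_on I"
  by (rule prob_space_std_gauss_on)

lemma nn_integral_gauss_likelihood_ratio:
  "(\<integral>\<^sup>+z. ennreal (gauss_likelihood_ratio I v z) \<partial>std_gauss_on I) = 1"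
proof -
  interpret P: product_prob_space "\<lambda>i. density lborel (normal_density (v i) 1)"
    by (rule product_prob_space_shifted_normal)
  have "(\<integral>\<^sup>+z. ennreal (gauss_likelihood_ratio I v z) \<partial>std_gauss_on I) =
      emeasure (density (std_gauss_on I) (gauss_likelihood_ratio I v)) (space (std_gauss_on I))"
    by (subst emeasure_density) (auto intro!: nn_integral_cong)
  also have "\<dots> = emeasure (shifted_gauss_on I v) (space (shifted_gauss_on I v))"
    by (simp add: density_gauss_likelihood_ratio[OF I] space_std_gauss_on shifted_gauss_on_def space_PiM)
  also have "\<dots> = 1"
    unfolding shifted_gauss_on_def by (rule P.emeasure_space_1)
  finally show ?thesis .
qed

lemma integrable_gauss_likelihood_ratio: "integrable (std_gauss_on I) (gauss_likelihood_ratio I v)"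
  by (rule integrableI_nn_integral_finite[of _ _ 1])
    (auto simp: nn_integral_gauss_likelihood_ratio less_imp_le[OF gauss_likelihood_ratio_pos])

lemma integral_gauss_likelihood_ratio: "(\<integral>z. gauss_likelihood_ratio I v z \<partial>std_gauss_on I) = 1"
  using nn_integral_gauss_likelihood_ratio
  by (subst (asm) nn_integral_eq_integral)
    (auto simp: integrable_gauss_likelihood_ratio less_imp_le[OF gauss_likelihood_ratio_pos])

lemma nn_integral_gauss_likelihood_ratio_sq:
  "(\<integral>\<^sup>+z. ennreal ((gauss_likelihood_ratio I v z)\<^sup>2) \<partial>std_gauss_on I) = ennreal (exp (\<Sum>i\<in>I. (v i)\<^sup>2))"
proof -
  interpret Q: product_prob_space "\<lambda>_. std_normal_distribution"
    by (rule product_prob_space_std_normal)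
  have "(\<integral>\<^sup>+z. ennreal ((gauss_likelihood_ratio I v z)\<^sup>2) \<partial>std_gauss_on I) =
      (\<integral>\<^sup>+z. (\<Prod>i\<in>I. ennreal ((normal_likelihood_ratio (v i) (z i))\<^sup>2)) \<partial>std_gauss_on I)"
    unfolding gauss_likelihood_ratio_def
    by (intro nn_integral_cong) (simp add: prod_ennreal power_mult_distrib prod_power_distrib)
  also have "\<dots> = (\<Prod>i\<in>I. \<integral>\<^sup>+t. ennreal ((normal_likelihood_ratio (v i) t)\<^sup>2) \<partial>std_normal_distribution)"
    unfolding std_gauss_on_def using I
    by (subst Q.product_nn_integral_prod) (auto simp: normal_likelihood_ratio_def)
  also have "\<dots> = ennreal (exp (\<Sum>i\<in>I. (v i)\<^sup>2))"
    using I by (simp add: nn_integral_likelihood_ratio_sq prod_ennreal exp_sum)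
  finally show ?thesis .
qed

lemma integrable_gauss_likelihood_ratio_sq:
  "integrable (std_gauss_on I) (\<lambda>z. (gauss_likelihood_ratio I v z)\<^sup>2)"
  by (rule integrableI_nn_integral_finite[OF _ _ nn_integral_gauss_likelihood_ratio_sq]) auto

lemma integral_gauss_likelihood_ratio_sq:
  "(\<integral>z. (gauss_likelihood_ratio I v z)\<^sup>2 \<partial>std_gauss_on I) = exp (\<Sum>i\<in>I. (v i)\<^sup>2)"
  using nn_integral_gauss_likelihood_ratio_sq
  by (subst (asm) nn_integral_eq_integral) (auto simp: integrable_gauss_likelihood_ratio_sq)

lemma integral_abs_gauss_likelihood_ratio_minus_1_le:
  "(\<integral>z. \<bar>gauss_likelihood_ratio I v z - 1\<bar> \<partial>std_gauss_on I) \<le> sqrt (exp (\<Sum>i\<in>I. (v i)\<^sup>2) - 1)"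
proof -
  define D where "D z = \<bar>gauss_likelihood_ratio I v z - 1\<bar>" for z
  have D_sq: "(\<lambda>z. (D z)\<^sup>2) = (\<lambda>z. (gauss_likelihood_ratio I v z)\<^sup>2 - 2 * gauss_likelihood_ratio I v z + 1)"
    by (auto simp: D_def power2_eq_square algebra_simps)
  have "integrable (std_gauss_on I) D"
    unfolding D_def using integrable_gauss_likelihood_ratio by auto
  moreover have "integrable (std_gauss_on I) (\<lambda>z. (D z)\<^sup>2)"
    unfolding D_sq using integrable_gauss_likelihood_ratio integrable_gauss_likelihood_ratio_sq by auto
  moreover have "(\<integral>z. (D z)\<^sup>2 \<partial>std_gauss_on I) = exp (\<Sum>i\<in>I. (v i)\<^sup>2) - 1"
    unfolding D_sq
    using integrable_gauss_likelihood_ratio integrable_gauss_likelihood_ratio_sq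
      integral_gauss_likelihood_ratio integral_gauss_likelihood_ratio_sq
    by (simp add: prob_space)
  \<comment> \<open>Cauchy--Schwarz, in the form of a nonnegative variance\<close>
  ultimately have "(\<integral>z. D z \<partial>std_gauss_on I)\<^sup>2 \<le> exp (\<Sum>i\<in>I. (v i)\<^sup>2) - 1"
    using variance_positive[of D] variance_eq[of D] by simp
  moreover have "0 \<le> (\<integral>z. D z \<partial>std_gauss_on I)"
    unfolding D_def by auto
  ultimately show ?thesis
    unfolding D_def by (simp add: real_le_rsqrt)
qed

end

lemma integral_translate_on_eq:
  assumes I: "finite I" and g: "g \<in> borel_measurable (PiM I (\<lambda>_. borel))"
  shows "(\<integral>z. g (translate_on I v z) \<partial>std_gauss_on I) =
    (\<integral>z. gauss_likelihood_ratio I v z * g z \<partial>std_gauss_on I)"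
proof -
  have "(\<integral>z. g (translate_on I v z) \<partial>std_gauss_on I) =
      (\<integral>z. g z \<partial>distr (std_gauss_on I) (shifted_gauss_on I v) (translate_on I v))"
    using g by (subst integral_distr[OF measurable_translate_on])
      (simp_all add: measurable_cong_sets[OF sets_shifted_gauss_on refl])
  also have "\<dots> = (\<integral>z. g z \<partial>density (std_gauss_on I) (gauss_likelihood_ratio I v))"
    by (simp add: distr_translate_std_gauss_on[OF I] density_gauss_likelihood_ratio[OF I])
  also have "\<dots> = (\<integral>z. gauss_likelihood_ratio I v z * g z \<partial>std_gauss_on I)"
    using g measurable_cong_sets[OF sets_std_gauss_on refl]
    by (subst integral_density) (auto simp: less_imp_le[OF gauss_likelihood_ratio_pos])
  finally show ?thesis .
qed

lemma integral_translate_on_diff_le: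
  assumes I: "finite I" and g: "g \<in> borel_measurable (PiM I (\<lambda>_. borel))" and g_bound: "\<And>z. \<bar>g z\<bar> \<le> 1"
  shows "\<bar>(\<integral>z. g (translate_on I v z) \<partial>std_gauss_on I) - (\<integral>z. g z \<partial>std_gauss_on I)\<bar>
    \<le> sqrt (exp (\<Sum>i\<in>I. (v i)\<^sup>2) - 1)"
proof -
  interpret prob_space "std_gauss_on I"
    by (rule prob_space_std_gauss_on)
  define L where "L = gauss_likelihood_ratio I v"
  have g_std: "g \<in> borel_measurable (std_gauss_on I)"
    using g by (simp add: measurable_cong_sets[OF sets_std_gauss_on refl])
  have int_g: "integrable (std_gauss_on I) g"
    using g_std g_bound by (intro integrable_const_bound[of _ 1]) auto
  have int_L: "integrable (std_gauss_on I) L"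
    unfolding L_def by (rule integrable_gauss_likelihood_ratio[OF I])
  have int_Lg: "integrable (std_gauss_on I) (\<lambda>z. L z * g z)"
  proof (rule Bochner_Integration.integrable_bound[OF int_L])
    show "AE z in std_gauss_on I. norm (L z * g z) \<le> norm (L z)"
      using g_bound by (auto simp: abs_mult intro!: AE_I2 mult_left_le)
  qed (use g_std in \<open>simp add: L_def\<close>)
  have "(\<integral>z. g (translate_on I v z) \<partial>std_gauss_on I) - (\<integral>z. g z \<partial>std_gauss_on I) =
      (\<integral>z. (L z - 1) * g z \<partial>std_gauss_on I)"
    using integral_translate_on_eq[OF I g] int_Lg int_g by (simp add: L_def left_diff_distrib)
  also have "\<bar>\<dots>\<bar> \<le> (\<integral>z. \<bar>(L z - 1) * g z\<bar> \<partial>std_gauss_on I)"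
    using integral_norm_bound[of _ "\<lambda>z. (L z - 1) * g z"] by simp
  also have "\<dots> \<le> (\<integral>z. \<bar>L z - 1\<bar> \<partial>std_gauss_on I)"
  proof (rule integral_mono)
    show "integrable (std_gauss_on I) (\<lambda>z. \<bar>(L z - 1) * g z\<bar>)"
      using int_Lg int_g by (auto simp: left_diff_distrib)
    show "integrable (std_gauss_on I) (\<lambda>z. \<bar>L z - 1\<bar>)"
      using int_L by auto
    show "\<bar>(L z - 1) * g z\<bar> \<le> \<bar>L z - 1\<bar>" for z
      using g_bound[of z] by (auto simp: abs_mult intro: mult_left_le)
  qed
  also have "\<dots> \<le> sqrt (exp (\<Sum>i\<in>I. (v i)\<^sup>2) - 1)"
    unfolding L_def by (rule integral_abs_gauss_likelihood_ratio_minus_1_le[OF I])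
  finally show ?thesis .
qed

section \<open>Exponential weights\<close>

lemma hedge_eq_exp_weights:
  assumes G: "finite G" "G \<noteq> {}"
  shows "hedge G \<eta> L t g = exp (-\<eta> * (\<Sum>s<t. L s g)) / (\<Sum>g'\<in>G. exp (-\<eta> * (\<Sum>s<t. L s g')))"
proof (induction t arbitrary: g)
  case 0
  then show ?case using G by simp
next
  case (Suc t)
  define W where "W g = exp (-\<eta> * (\<Sum>s<t. L s g))" for g
  define S where "S = (\<Sum>g'\<in>G. W g')"
  have "S > 0"
    unfolding S_def W_def using G by (intro sum_pos) auto
  have W_Suc: "exp (-\<eta> * (\<Sum>s<Suc t. L s g)) = W g * exp (-\<eta> * L t g)" for g
    by (simp add: W_def exp_add[symmetric] algebra_simps)
  have "hedge G \<eta> L (Suc t) g =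
      (W g / S * exp (-\<eta> * L t g)) / ((\<Sum>g'\<in>G. W g' * exp (-\<eta> * L t g')) / S)"
    by (simp add: Suc.IH W_def S_def sum_divide_distrib)
  also have "\<dots> = (W g * exp (-\<eta> * L t g)) / (\<Sum>g'\<in>G. W g' * exp (-\<eta> * L t g'))"
    using \<open>S > 0\<close> by (simp add: field_simps)
  finally show ?case
    by (simp only: W_Suc)
qed

lemma hedge_nonneg: "finite G \<Longrightarrow> G \<noteq> {} \<Longrightarrow> hedge G \<eta> L t g \<ge> 0"
  by (simp add: hedge_eq_exp_weights divide_nonneg_nonneg sum_nonneg)

lemma sum_hedge:
  assumes G: "finite G" "G \<noteq> {}"
  shows "(\<Sum>g\<in>G. hedge G \<eta> L t g) = 1"
proof -
  have "(\<Sum>g\<in>G. exp (-\<eta> * (\<Sum>s<t. L s g))) > 0"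
    using G by (intro sum_pos) auto
  then show ?thesis
    by (simp add: hedge_eq_exp_weights[OF G] sum_divide_distrib[symmetric])
qed

lemma hedge_expected_loss_bounds:
  assumes G: "finite G" "G \<noteq> {}" and L: "\<forall>g\<in>G. 0 \<le> L t g \<and> L t g \<le> 1"
  shows "0 \<le> (\<Sum>g\<in>G. hedge G \<eta> L t g * L t g)" "(\<Sum>g\<in>G. hedge G \<eta> L t g * L t g) \<le> 1"
proof -
  show "0 \<le> (\<Sum>g\<in>G. hedge G \<eta> L t g * L t g)"
    using G L by (intro sum_nonneg mult_nonneg_nonneg hedge_nonneg) auto
  have "(\<Sum>g\<in>G. hedge G \<eta> L t g * L t g) \<le> (\<Sum>g\<in>G. hedge G \<eta> L t g)"
    using G L by (intro sum_mono mult_left_le hedge_nonneg) auto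
  then show "(\<Sum>g\<in>G. hedge G \<eta> L t g * L t g) \<le> 1"
    using sum_hedge[OF G] by simp
qed

definition hedge_potential :: "'g set \<Rightarrow> real \<Rightarrow> (nat \<Rightarrow> 'g \<Rightarrow> real) \<Rightarrow> nat \<Rightarrow> real" where
  "hedge_potential G \<eta> L t = ln (\<Sum>g\<in>G. exp (-\<eta> * (\<Sum>s<t. L s g)))"

lemma ln_bernoulli_mgf_le:
  fixes q \<eta> :: real
  assumes "0 \<le> q" "q \<le> 1" "0 \<le> \<eta>"
  shows "ln (1 - q + q * exp (-\<eta>)) \<le> -\<eta> * q + \<eta>\<^sup>2 / 8"
proof -
  have pos: "1 + (1 - q) * (exp \<eta> - 1) > 0"
    using assms by (intro add_pos_nonneg mult_nonneg_nonneg) auto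
  have "1 - q + q * exp (-\<eta>) = exp (-\<eta>) * (1 + (1 - q) * (exp \<eta> - 1))"
    by (simp add: exp_minus field_simps)
  then have "ln (1 - q + q * exp (-\<eta>)) = -\<eta> + ln (1 + (1 - q) * (exp \<eta> - 1))"
    using pos by (simp add: ln_mult)
  then show ?thesis
    using Hoeffdings_lemma_aux[of \<eta> "1 - q"] assms by (simp add: algebra_simps)
qed

lemma hedge_potential_Suc_le:
  assumes G: "finite G" "G \<noteq> {}" and \<eta>: "0 \<le> \<eta>" and L: "\<forall>g\<in>G. 0 \<le> L t g \<and> L t g \<le> 1"
  shows "hedge_potential G \<eta> L (Suc t) \<le>
    hedge_potential G \<eta> L t - \<eta> * (\<Sum>g\<in>G. hedge G \<eta> L t g * L t g) + \<eta>\<^sup>2 / 8"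
proof -
  define W where "W g = exp (-\<eta> * (\<Sum>s<t. L s g))" for g
  define S where "S = (\<Sum>g\<in>G. W g)"
  define q where "q = (\<Sum>g\<in>G. hedge G \<eta> L t g * L t g)"
  have "S > 0"
    unfolding S_def W_def using G by (intro sum_pos) auto
  have hedge_W: "hedge G \<eta> L t g = W g / S" for g
    using G by (simp add: hedge_eq_exp_weights W_def S_def)
  have q: "0 \<le> q" "q \<le> 1"
    unfolding q_def using hedge_expected_loss_bounds[of G L t \<eta>] G L by auto
  \<comment> \<open>convexity of exp bounds the loss factor by its chord\<close>
  have chord: "exp (-\<eta> * L t g) \<le> 1 - L t g + L t g * exp (-\<eta>)" if "g \<in> G" for g
    using convex_onD[OF exp_convex, of "L t g" 0 "-\<eta>"] L that by (simp add: algebra_simps)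
  have "(\<Sum>g\<in>G. exp (-\<eta> * (\<Sum>s<Suc t. L s g))) = (\<Sum>g\<in>G. W g * exp (-\<eta> * L t g))"
    by (simp add: W_def exp_add[symmetric] algebra_simps)
  also have "\<dots> \<le> (\<Sum>g\<in>G. W g * (1 - L t g + L t g * exp (-\<eta>)))"
    by (intro sum_mono mult_left_mono chord) (simp_all add: W_def)
  also have "\<dots> = S - (\<Sum>g\<in>G. W g * L t g) + (\<Sum>g\<in>G. W g * L t g) * exp (-\<eta>)"
    by (simp add: S_def algebra_simps sum.distrib sum_subtractf sum_distrib_left)
  also have "(\<Sum>g\<in>G. W g * L t g) = S * q"
    using \<open>S > 0\<close> by (simp add: q_def hedge_W sum_divide_distrib[symmetric])
  also have "S - S * q + S * q * exp (-\<eta>) = S * (1 - q + q * exp (-\<eta>))"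
    by (simp add: algebra_simps)
  finally have "hedge_potential G \<eta> L (Suc t) \<le> ln (S * (1 - q + q * exp (-\<eta>)))"
    unfolding hedge_potential_def using G by (intro ln_mono sum_pos) auto
  also have "\<dots> = hedge_potential G \<eta> L t + ln (1 - q + q * exp (-\<eta>))"
  proof -
    have "0 < 1 - q + q * exp (-\<eta>)"
      using q by (cases "q = 1") (auto intro: add_pos_nonneg)
    then show ?thesis
      using \<open>S > 0\<close> by (simp add: ln_mult hedge_potential_def S_def W_def)
  qed
  finally show ?thesis
    using ln_bernoulli_mgf_le[OF q \<eta>] by (simp add: q_def)
qed

lemma hedge_cumulative_loss_le:
  assumes G: "finite G" "G \<noteq> {}" and \<eta>: "0 \<le> \<eta>"
    and L: "\<forall>t. \<forall>g\<in>G. 0 \<le> L t g \<and> L t g \<le> 1" and g0: "g0 \<in> G"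
  shows "\<eta> * (\<Sum>t<T. \<Sum>g\<in>G. hedge G \<eta> L t g * L t g) \<le>
    \<eta> * (\<Sum>t<T. L t g0) + ln (real (card G)) + real T * \<eta>\<^sup>2 / 8"
proof -
  have "hedge_potential G \<eta> L T \<le>
      ln (real (card G)) - \<eta> * (\<Sum>t<T. \<Sum>g\<in>G. hedge G \<eta> L t g * L t g) + real T * \<eta>\<^sup>2 / 8"
  proof (induction T)
    case 0
    then show ?case by (simp add: hedge_potential_def)
  next
    case (Suc T)
    then show ?case
      using hedge_potential_Suc_le[OF G \<eta>, of L T] L by (simp add: field_simps)
  qed
  moreover have "-\<eta> * (\<Sum>t<T. L t g0) \<le> hedge_potential G \<eta> L T"
  proof -
    have "exp (-\<eta> * (\<Sum>t<T. L t g0)) \<le> (\<Sum>g\<in>G. exp (-\<eta> * (\<Sum>t<T. L t g)))"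
      using G g0 by (intro member_le_sum) auto
    then show ?thesis
      unfolding hedge_potential_def using G by (subst ln_ge_iff) (auto intro: sum_pos)
  qed
  ultimately show ?thesis
    by simp
qed

lemma learning_rate_balance:
  fixes l T :: real
  assumes "0 < l" "0 < T"
  shows "l / sqrt (8 * l / T) + T * sqrt (8 * l / T) / 8 = sqrt (T * l / 2)"
proof -
  define \<eta> where "\<eta> = sqrt (8 * l / T)"
  have "\<eta> > 0" "\<eta>\<^sup>2 = 8 * l / T"
    using assms by (simp_all add: \<eta>_def)
  then have "l / \<eta> + T * \<eta> / 8 = T * \<eta> / 4"
    using assms by (simp add: field_simps power2_eq_square)
  also have "\<dots> = sqrt ((T / 4)\<^sup>2 * \<eta>\<^sup>2)"
    using assms \<open>\<eta> > 0\<close> by (simp add: real_sqrt_mult)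
  also have "(T / 4)\<^sup>2 * \<eta>\<^sup>2 = T * l / 2"
    using assms \<open>\<eta>\<^sup>2 = 8 * l / T\<close> by (simp add: power2_eq_square field_simps)
  finally show ?thesis
    by (simp add: \<eta>_def)
qed

lemma hedge_regret:
  assumes G: "finite G" "G \<noteq> {}" and L: "\<forall>t. \<forall>g\<in>G. 0 \<le> L t g \<and> L t g \<le> 1" and g0: "g0 \<in> G"
    and T: "T > 0" and \<eta>: "\<eta> = sqrt (8 * ln (real (card G)) / real T)"
  shows "(\<Sum>t<T. \<Sum>g\<in>G. hedge G \<eta> L t g * L t g) \<le>
    (\<Sum>t<T. L t g0) + sqrt (real T * ln (real (card G)) / 2)"
proof (cases "card G = 1")
  case True
  with g0 have "G = {g0}"
    by (auto simp: card_1_singleton_iff)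
  then show ?thesis
    using sum_hedge[OF G, of \<eta> L] by simp
next
  case False
  then have "card G > 1"
    using G by (simp add: Suc_lessI card_gt_0_iff)
  then have l: "ln (real (card G)) > 0"
    by simp
  then have "\<eta> > 0"
    using T \<eta> by simp
  then have "(\<Sum>t<T. \<Sum>g\<in>G. hedge G \<eta> L t g * L t g) \<le>
      (\<Sum>t<T. L t g0) + (ln (real (card G)) / \<eta> + real T * \<eta> / 8)"
    using hedge_cumulative_loss_le[OF G _ L g0, of \<eta> T] by (simp add: field_simps power2_eq_square)
  also have "ln (real (card G)) / \<eta> + real T * \<eta> / 8 = sqrt (real T * ln (real (card G)) / 2)"
    unfolding \<eta> using learning_rate_balance[OF l] T by simp
  finally show ?thesis .
qed

section \<open>Shattering and the Sauer--Shelah bound\<close>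

definition shatters_family :: "'a set set \<Rightarrow> 'a set \<Rightarrow> bool" where
  "shatters_family C A \<longleftrightarrow> (\<forall>B\<subseteq>A. \<exists>c\<in>C. c \<inter> A = B)"

lemma shatters_familyD: "shatters_family C A \<Longrightarrow> B \<subseteq> A \<Longrightarrow> \<exists>c\<in>C. c \<inter> A = B"
  unfolding shatters_family_def by (elim allE impE)

lemma shatters_family_mono: "C \<subseteq> C' \<Longrightarrow> shatters_family C A \<Longrightarrow> shatters_family C' A"
  unfolding shatters_family_def by (meson subsetD)

lemma shatters_family_remove:
  assumes "p \<notin> A" "shatters_family ((\<lambda>c. c - {p}) ` C) A"
  shows "shatters_family C A"
  unfolding shatters_family_def
proof (intro allI impI)
  fix B assume "B \<subseteq> A"
  then obtain c where "c \<in> C" "(c - {p}) \<inter> A = B"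
    using shatters_familyD[OF assms(2)] by auto
  moreover have "(c - {p}) \<inter> A = c \<inter> A"
    using assms(1) by auto
  ultimately show "\<exists>c\<in>C. c \<inter> A = B"
    by auto
qed

lemma shatters_family_insert:
  assumes "p \<notin> A" "shatters_family {c\<in>C. p \<notin> c} A"
    "shatters_family ((\<lambda>c. c - {p}) ` {c\<in>C. p \<in> c}) A"
  shows "shatters_family C (insert p A)"
  unfolding shatters_family_def
proof (intro allI impI)
  fix B assume B: "B \<subseteq> insert p A"
  show "\<exists>c\<in>C. c \<inter> insert p A = B"
  proof (cases "p \<in> B")
    case True
    have "B - {p} \<subseteq> A"
      using B by auto
    then obtain c where c: "c \<in> C" "p \<in> c" "(c - {p}) \<inter> A = B - {p}"
      using shatters_familyD[OF assms(3) \<open>B - {p} \<subseteq> A\<close>] by auto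
    have "c \<inter> insert p A = insert p ((c - {p}) \<inter> A)"
      using c(2) assms(1) by auto
    with c(1,3) True show ?thesis
      by auto
  next
    case False
    with B have "B \<subseteq> A"
      by auto
    then obtain c where "c \<in> C" "c \<inter> A = B" "p \<notin> c"
      using shatters_familyD[OF assms(2) \<open>B \<subseteq> A\<close>] by auto
    with False show ?thesis
      by auto
  qed
qed

lemma card_shattered_subsets_insert_ge:
  assumes S: "finite S" "p \<notin> S"
  shows "card {A. A \<subseteq> S \<and> shatters_family {c\<in>C. p \<notin> c} A}
      + card {A. A \<subseteq> S \<and> shatters_family ((\<lambda>c. c - {p}) ` {c\<in>C. p \<in> c}) A}
    \<le> card {A. A \<subseteq> insert p S \<and> shatters_family C A}"
proof -
  define Sh0 where "Sh0 = {A. A \<subseteq> S \<and> shatters_family {c\<in>C. p \<notin> c} A}"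
  define Sh1 where "Sh1 = {A. A \<subseteq> S \<and> shatters_family ((\<lambda>c. c - {p}) ` {c\<in>C. p \<in> c}) A}"
  define F where "F = {A. A \<subseteq> insert p S \<and> shatters_family C A}"
  have fin: "finite Sh0" "finite Sh1" "finite F"
    using S by (simp_all add: Sh0_def Sh1_def F_def)
  have p: "p \<notin> A" if "A \<subseteq> S" for A
    using that S(2) by auto
  have halves: "Sh0 \<union> Sh1 \<subseteq> F"
  proof
    fix A assume "A \<in> Sh0 \<union> Sh1"
    then have A: "A \<subseteq> S" "shatters_family {c\<in>C. p \<notin> c} A \<or> shatters_family {c\<in>C. p \<in> c} A"
      using shatters_family_remove[OF p] by (auto simp: Sh0_def Sh1_def)
    from A(2) have "shatters_family C A"
    proof
      assume "shatters_family {c\<in>C. p \<notin> c} A"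
      then show ?thesis
        by (rule shatters_family_mono[rotated]) auto
    next
      assume "shatters_family {c\<in>C. p \<in> c} A"
      then show ?thesis
        by (rule shatters_family_mono[rotated]) auto
    qed
    with A(1) show "A \<in> F"
      by (auto simp: F_def)
  qed
  \<comment> \<open>a set shattered by both halves is shattered by C even with p added\<close>
  have with_p: "insert p ` (Sh0 \<inter> Sh1) \<subseteq> F"
    using shatters_family_insert[OF p] by (auto simp: Sh0_def Sh1_def F_def)
  have "inj_on (insert p) (Sh0 \<inter> Sh1)"
    using p by (auto simp: inj_on_def Sh0_def insert_ident)
  then have "card Sh0 + card Sh1 = card (Sh0 \<union> Sh1) + card (insert p ` (Sh0 \<inter> Sh1))"
    using card_Un_Int[OF fin(1,2)] by (simp add: card_image)
  also have "\<dots> = card ((Sh0 \<union> Sh1) \<union> insert p ` (Sh0 \<inter> Sh1))"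
    using fin p by (intro card_Un_disjoint[symmetric]) (auto simp: Sh0_def Sh1_def)
  also have "\<dots> \<le> card F"
    using fin halves with_p by (intro card_mono) auto
  finally show ?thesis
    by (simp add: Sh0_def Sh1_def F_def)
qed

lemma card_le_card_shattered_subsets:
  assumes "finite S" "C \<subseteq> Pow S"
  shows "card C \<le> card {A. A \<subseteq> S \<and> shatters_family C A}"
  using assms
proof (induction S arbitrary: C rule: finite_induct)
  case empty
  show ?case
  proof (cases "C = {}")
    case False
    then have "{A. A \<subseteq> {} \<and> shatters_family C A} = {{}}"
      by (auto simp: shatters_family_def)
    moreover have "card C \<le> 1"
      using empty card_mono[of "{{}}" C] by simp
    ultimately show ?thesis
      by simp
  qed simp
next
  case (insert p S)
  define C0 where "C0 = {c\<in>C. p \<notin> c}"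
  define Cp where "Cp = {c\<in>C. p \<in> c}"
  have "finite C"
    using insert.prems insert.hyps(1) by (meson finite_Pow_iff finite_insert rev_finite_subset)
  moreover have "C = C0 \<union> Cp" "C0 \<inter> Cp = {}"
    by (auto simp: C0_def Cp_def)
  ultimately have "card C = card C0 + card Cp"
    by (metis card_Un_disjoint finite_Un)
  also have "card Cp = card ((\<lambda>c. c - {p}) ` Cp)"
    unfolding Cp_def by (rule card_image[symmetric]) (auto simp: inj_on_def)
  also have "card C0 + card ((\<lambda>c. c - {p}) ` Cp)
      \<le> card {A. A \<subseteq> S \<and> shatters_family C0 A}
        + card {A. A \<subseteq> S \<and> shatters_family ((\<lambda>c. c - {p}) ` Cp) A}"
    using insert.prems by (intro add_mono insert.IH) (auto simp: C0_def Cp_def)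
  also have "\<dots> \<le> card {A. A \<subseteq> insert p S \<and> shatters_family C A}"
    unfolding C0_def Cp_def by (rule card_shattered_subsets_insert_ge[OF insert.hyps])
  finally show ?case .
qed

lemma card_subsets_card_le:
  assumes "finite S"
  shows "card {A. A \<subseteq> S \<and> card A \<le> k} \<le> (\<Sum>i\<le>k. card S choose i)"
proof -
  have "{A. A \<subseteq> S \<and> card A \<le> k} = (\<Union>i\<le>k. {A. A \<subseteq> S \<and> card A = i})"
    by auto
  then have "card {A. A \<subseteq> S \<and> card A \<le> k} \<le> (\<Sum>i\<le>k. card {A. A \<subseteq> S \<and> card A = i})"
    by (simp add: card_UN_le)
  also have "\<dots> = (\<Sum>i\<le>k. card S choose i)"
    using assms by (simp add: n_subsets)
  finally show ?thesis .
qed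

lemma sum_binomial_le_exp_pow:
  fixes r :: real
  assumes rk: "real k \<le> r" and rn: "real n \<le> r"
  shows "real (\<Sum>i\<le>k. n choose i) \<le> (exp 1 * r / real k) ^ k"
proof (cases "k = 0")
  case False
  then have k: "k \<ge> 1"
    by simp
  define x where "x = real k / r"
  have x: "0 < x" "x \<le> 1" "real n * x \<le> real k"
    using k rk rn by (auto simp: x_def field_simps)
  \<comment> \<open>weight the binomial sum by powers of x = k / r\<close>
  have "(\<Sum>i\<le>k. real (n choose i)) * x ^ k \<le> (\<Sum>i\<le>k. real (n choose i) * x ^ i)"
    unfolding sum_distrib_right using x by (intro sum_mono mult_left_mono power_decreasing) auto
  also have "\<dots> \<le> (\<Sum>i\<le>k + n. real (n choose i) * x ^ i)"
    using x by (intro sum_mono2) auto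
  also have "\<dots> = (\<Sum>i\<le>n. real (n choose i) * x ^ i)"
    by (rule sum.mono_neutral_right) auto
  also have "\<dots> = (x + 1) ^ n"
    by (simp add: binomial_ring)
  also have "\<dots> \<le> exp x ^ n"
    using x by (intro power_mono) (auto simp: add.commute exp_ge_add_one_self)
  also have "\<dots> \<le> exp (real k)"
    using x by (simp add: exp_of_nat_mult[symmetric])
  finally have "(\<Sum>i\<le>k. real (n choose i)) \<le> exp (real k) / x ^ k"
    using x by (simp add: field_simps)
  also have "\<dots> = (exp 1 * r / real k) ^ k"
    using x k by (simp add: x_def power_divide power_mult_distrib exp_of_nat_mult[symmetric] field_simps)
  finally show ?thesis
    by simp
qed simp

section \<open>Smoothed classifiers and VC dimension\<close>

lemma std_gauss_eq_std_gauss_on: "std_gauss d = std_gauss_on {..<d}"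
  by (simp add: std_gauss_def std_gauss_on_def)

lemma shift_ext_eq_ext_restrict:
  "x \<in> Rd d \<Longrightarrow> shift x \<sigma> (ext d z) = ext d (\<lambda>i\<in>{..<d}. x i + \<sigma> * z i)"
  by (auto simp: shift_def ext_def Rd_def fun_eq_iff)

lemma measurable_affine_restrict:
  "(\<lambda>z. \<lambda>i\<in>I. a i + \<sigma> * z i) \<in> measurable (PiM I (\<lambda>_. borel)) (PiM I (\<lambda>_. borel :: real measure))"
  by (intro measurable_restrict) measurable

lemma gauss_exp_diff_le:
  fixes h :: "(nat \<Rightarrow> real) \<Rightarrow> real"
  assumes \<sigma>: "\<sigma> > 0" and x: "x \<in> Rd d" and x': "x' \<in> Rd d"
    and h_meas: "(\<lambda>z. h (ext d z)) \<in> borel_measurable (PiM {..<d} (\<lambda>_. borel))"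
    and h_bound: "\<forall>p\<in>Rd d. \<bar>h p\<bar> \<le> 1"
  shows "\<bar>gauss_exp d \<sigma> h x - gauss_exp d \<sigma> h x'\<bar> \<le> sqrt (exp ((l2dist d x x' / \<sigma>)\<^sup>2) - 1)"
proof -
  define v where "v i = (x i - x' i) / \<sigma>" for i
  define g where "g z = h (ext d (\<lambda>i\<in>{..<d}. x' i + \<sigma> * z i))" for z
  have g_meas: "g \<in> borel_measurable (PiM {..<d} (\<lambda>_. borel))"
    using measurable_comp[OF measurable_affine_restrict h_meas] unfolding g_def by (simp add: o_def)
  have g_bound: "\<bar>g z\<bar> \<le> 1" for z
    using h_bound by (simp add: g_def ext_def Rd_def)
  have "shift x \<sigma> (ext d z) = ext d (\<lambda>i\<in>{..<d}. x' i + \<sigma> * translate_on {..<d} v z i)" for z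
    unfolding shift_ext_eq_ext_restrict[OF x] using \<sigma>
    by (simp add: translate_on_def v_def ext_def fun_eq_iff field_simps)
  then have "gauss_exp d \<sigma> h x = (\<integral>z. g (translate_on {..<d} v z) \<partial>std_gauss_on {..<d})"
    by (simp add: gauss_exp_def std_gauss_eq_std_gauss_on g_def)
  moreover have "gauss_exp d \<sigma> h x' = (\<integral>z. g z \<partial>std_gauss_on {..<d})"
    unfolding gauss_exp_def std_gauss_eq_std_gauss_on using x'
    by (intro Bochner_Integration.integral_cong refl) (simp add: g_def shift_ext_eq_ext_restrict)
  moreover have "(\<Sum>i<d. (v i)\<^sup>2) = (l2dist d x x' / \<sigma>)\<^sup>2"
    unfolding l2dist_def l2norm_def v_def
    by (simp add: power_divide sum_divide_distrib[symmetric] sum_nonneg)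
  ultimately show ?thesis
    using integral_translate_on_diff_le[OF _ g_meas g_bound, of v] by simp
qed

lemma gauss_exp_eq_gauss_prob:
  assumes x: "x \<in> Rd d" and h_meas: "(\<lambda>z. h (ext d z)) \<in> borel_measurable (PiM {..<d} (\<lambda>_. borel))"
    and h_vals: "\<forall>p\<in>Rd d. h p \<in> {-1, 1}" and y: "y \<in> {-1, 1}"
  shows "y * gauss_exp d \<sigma> h x = 2 * gauss_prob d \<sigma> h x y - 1"
proof -
  interpret prob_space "std_gauss d"
    unfolding std_gauss_eq_std_gauss_on by (rule prob_space_std_gauss_on)
  define f where "f z = h (shift x \<sigma> (ext d z))" for z
  have "f \<in> borel_measurable (PiM {..<d} (\<lambda>_. borel))"
    using measurable_comp[OF measurable_affine_restrict h_meas]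
    unfolding f_def shift_ext_eq_ext_restrict[OF x] by (simp add: o_def)
  then have f_meas: "f \<in> borel_measurable (std_gauss d)"
    by (simp add: std_gauss_eq_std_gauss_on measurable_cong_sets[OF sets_std_gauss_on refl])
  have f_vals: "f z \<in> {-1, 1}" for z
    using x h_vals by (simp add: f_def shift_def Rd_def ext_def)
  define A where "A = {z \<in> space (std_gauss d). f z = 1}"
  have A: "A \<in> sets (std_gauss d)"
    unfolding A_def using f_meas by measurable
  have "gauss_exp d \<sigma> h x = (\<integral>z. 2 * indicator A z - 1 \<partial>std_gauss d)"
    unfolding gauss_exp_def f_def[symmetric]
    using f_vals by (intro Bochner_Integration.integral_cong refl) (force simp: A_def indicator_def)
  also have "\<dots> = 2 * prob A - 1"
    using A by (simp add: emeasure_eq_measure prob_space)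
  finally have "gauss_exp d \<sigma> h x = 2 * prob A - 1" .
  moreover have "gauss_prob d \<sigma> h x 1 = prob A"
    unfolding gauss_prob_def A_def f_def ..
  moreover have "gauss_prob d \<sigma> h x (-1) = prob (space (std_gauss d) - A)"
    unfolding gauss_prob_def f_def[symmetric] using f_vals by (intro arg_cong[where f = prob]) (auto simp: A_def)
  ultimately show ?thesis
    using y A by (auto simp: prob_compl)
qed

lemma sqrt_exp_sq_minus_1_le_half_eps:
  assumes \<sigma>: "\<sigma> > 0" and \<epsilon>: "0 < \<epsilon>" "\<epsilon> \<le> 1" and r: "0 \<le> r" "r \<le> alg2_gamma \<sigma> \<epsilon>"
  shows "sqrt (exp ((r / \<sigma>)\<^sup>2) - 1) \<le> \<epsilon> / 2"
proof -
  have "(r / \<sigma>)\<^sup>2 \<le> (alg2_gamma \<sigma> \<epsilon> / \<sigma>)\<^sup>2"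
    using r \<sigma> by (intro power_mono divide_right_mono) auto
  also have "\<dots> = \<epsilon>\<^sup>2 * pi / 32"
    using \<sigma> by (simp add: alg2_gamma_def alg2_eps_def power_divide power_mult_distrib)
  finally have r_sq: "(r / \<sigma>)\<^sup>2 \<le> \<epsilon>\<^sup>2 * pi / 32" .
  have "\<epsilon>\<^sup>2 * pi \<le> \<epsilon>\<^sup>2 * 4" "\<epsilon>\<^sup>2 \<le> 1"
    using \<epsilon> pi_less_4 by (auto simp: power_le_one)
  then have "exp ((r / \<sigma>)\<^sup>2) \<le> 1 + 2 * (r / \<sigma>)\<^sup>2"
    using exp_bound_lemma[of "(r / \<sigma>)\<^sup>2"] r_sq by simp
  also have "\<dots> \<le> 1 + \<epsilon>\<^sup>2 * pi / 16"
    using r_sq by linarith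
  also have "\<dots> \<le> 1 + (\<epsilon> / 2)\<^sup>2"
    using \<open>\<epsilon>\<^sup>2 * pi \<le> \<epsilon>\<^sup>2 * 4\<close> by (simp add: power_divide mult.commute)
  finally have "sqrt (exp ((r / \<sigma>)\<^sup>2) - 1) \<le> sqrt ((\<epsilon> / 2)\<^sup>2)"
    by (intro real_sqrt_le_mono) simp
  then show ?thesis
    using \<epsilon> by simp
qed

lemma card_le_vc_dim:
  assumes "finite_vc d H" "finite A" "A \<subseteq> Rd d" "shatters H A"
  shows "card A \<le> vc_dim d H"
proof -
  obtain n where "\<forall>A. finite A \<and> A \<subseteq> Rd d \<and> shatters H A \<longrightarrow> card A \<le> n"
    using assms(1) unfolding finite_vc_def by blast
  then have "bdd_above {card A | A. finite A \<and> A \<subseteq> Rd d \<and> shatters H A}"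
    by (intro bdd_aboveI[of _ n]) auto
  then show ?thesis
    unfolding vc_dim_def using assms(2-4) by (intro cSup_upper) auto
qed

definition positives :: "'a set \<Rightarrow> ('a \<Rightarrow> real) \<Rightarrow> 'a set" where
  "positives S f = {a \<in> S. f a = 1}"

lemma inj_on_positives_restr_class:
  assumes "\<forall>h\<in>H. \<forall>p\<in>S. h p \<in> {-1, 1}"
  shows "inj_on (positives S) (restr_class H S)"
proof (rule inj_onI)
  fix f f' assume "f \<in> restr_class H S" "f' \<in> restr_class H S" and eq: "positives S f = positives S f'"
  then obtain h h' where h: "h \<in> H" "f = restrict h S" and h': "h' \<in> H" "f' = restrict h' S"
    by (auto simp: restr_class_def)
  show "f = f'"
  proof
    fix a show "f a = f' a"
    proof (cases "a \<in> S")
      case True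
      have "a \<in> positives S f \<longleftrightarrow> a \<in> positives S f'"
        using eq by simp
      then have "(h a = 1) = (h' a = 1)"
        using True h h' by (simp add: positives_def)
      moreover have "h a \<in> {-1, 1}" "h' a \<in> {-1, 1}"
        using assms h(1) h'(1) True by auto
      ultimately show ?thesis
        using True h h' by auto
    qed (simp add: h h')
  qed
qed

lemma shatters_if_shatters_family_positives:
  assumes A: "A \<subseteq> S" "shatters_family (positives S ` restr_class H S) A"
  shows "shatters H A"
  unfolding shatters_def
proof (intro allI impI)
  fix B assume "B \<subseteq> A"
  then obtain h where "h \<in> H" "positives S (restrict h S) \<inter> A = B"
    using shatters_familyD[OF A(2)] by (auto simp: restr_class_def)
  moreover have "(h a = 1) = (a \<in> positives S (restrict h S) \<inter> A)" if "a \<in> A" for a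
    using that A(1) by (auto simp: positives_def)
  ultimately show "\<exists>h\<in>H. \<forall>a\<in>A. (h a = 1) = (a \<in> B)"
    by blast
qed

lemma card_restr_class_le:
  fixes H :: "((nat \<Rightarrow> real) \<Rightarrow> real) set"
  assumes S: "finite S" "S \<subseteq> Rd d" and H_vals: "\<forall>h\<in>H. \<forall>p\<in>Rd d. h p \<in> {-1, 1}"
    and vc: "finite_vc d H"
  shows "finite (restr_class H S)" "card (restr_class H S) \<le> card {A. A \<subseteq> S \<and> card A \<le> vc_dim d H}"
proof -
  have inj: "inj_on (positives S) (restr_class H S)"
    using S(2) H_vals by (intro inj_on_positives_restr_class) auto
  have sub: "positives S ` restr_class H S \<subseteq> Pow S"
    by (auto simp: positives_def)
  then show "finite (restr_class H S)"
    using S(1) inj by (metis finite_Pow_iff finite_imageD rev_finite_subset)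
  have "card (restr_class H S) = card (positives S ` restr_class H S)"
    using inj by (simp add: card_image)
  also have "\<dots> \<le> card {A. A \<subseteq> S \<and> shatters_family (positives S ` restr_class H S) A}"
    by (rule card_le_card_shattered_subsets[OF S(1) sub])
  also have "\<dots> \<le> card {A. A \<subseteq> S \<and> card A \<le> vc_dim d H}"
  proof (intro card_mono subsetI)
    fix A assume "A \<in> {A. A \<subseteq> S \<and> shatters_family (positives S ` restr_class H S) A}"
    then have "A \<subseteq> S" "shatters H A"
      using shatters_if_shatters_family_positives by auto
    moreover have "finite A" "A \<subseteq> Rd d"
      using \<open>A \<subseteq> S\<close> S finite_subset by auto
    ultimately show "A \<in> {A. A \<subseteq> S \<and> card A \<le> vc_dim d H}"
      using card_le_vc_dim[OF vc] by simp
  qed (simp add: S(1))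
  finally show "card (restr_class H S) \<le> card {A. A \<subseteq> S \<and> card A \<le> vc_dim d H}" .
qed

lemma ln_card_restr_class_le:
  fixes H :: "((nat \<Rightarrow> real) \<Rightarrow> real) set" and r :: real
  assumes S: "finite S" "S \<subseteq> Rd d" and H_vals: "\<forall>h\<in>H. \<forall>p\<in>Rd d. h p \<in> {-1, 1}"
    and vc: "finite_vc d H" and H: "H \<noteq> {}"
    and k: "real (vc_dim d H) \<le> r" and r: "real (card S) \<le> r"
  shows "ln (real (card (restr_class H S))) \<le> real (vc_dim d H) * ln (exp 1 * r / real (vc_dim d H))"
proof -
  let ?k = "vc_dim d H"
  have "real (card (restr_class H S)) \<le> real (\<Sum>i\<le>?k. card S choose i)"
    using card_restr_class_le(2)[OF S H_vals vc] card_subsets_card_le[OF S(1), of ?k] by linarith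
  also have "\<dots> \<le> (exp 1 * r / real ?k) ^ ?k"
    by (rule sum_binomial_le_exp_pow[OF k r])
  finally have "ln (real (card (restr_class H S))) \<le> ln ((exp 1 * r / real ?k) ^ ?k)"
    using card_restr_class_le(1)[OF S H_vals vc] H
    by (intro ln_mono) (auto simp: restr_class_def card_gt_0_iff)
  also have "\<dots> = real ?k * ln (exp 1 * r / real ?k)"
    using k by (cases "?k = 0") (simp_all add: ln_realpow)
  finally show ?thesis .
qed

section \<open>Algorithm 2\<close>

lemma alg2_gamma_eq: "alg2_gamma \<sigma> \<epsilon> = sqrt (pi / 32) * \<sigma> * \<epsilon>"
proof -
  have "pi / 32 * (2 / pi) = (1 / 4)\<^sup>2"
    by (simp add: power2_eq_square)
  then have "sqrt (pi / 32) * sqrt (2 / pi) = 1 / 4"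
    by (simp only: real_sqrt_mult[symmetric] real_sqrt_abs)
  then have "sqrt (pi / 32) = (1 / 4) / sqrt (2 / pi)"
    by (simp add: field_simps)
  then show ?thesis
    by (simp add: alg2_gamma_def alg2_eps_def)
qed

lemma covering_number_eq_card:
  assumes "alg2_setup d X \<sigma> \<epsilon> H Z \<phi> M zs"
  shows "covering_number d X (sqrt (pi / 32) * \<sigma> * \<epsilon>) = card Z"
  unfolding covering_number_def alg2_gamma_eq[symmetric]
proof (rule Least_equality)
  show "\<exists>Z'. finite Z' \<and> is_cover d X (alg2_gamma \<sigma> \<epsilon>) Z' \<and> card Z' = card Z"
    using assms by (auto simp: alg2_setup_def)
qed (use assms in \<open>auto simp: alg2_setup_def\<close>)

lemma alg2_S_eq: "alg2_S Z \<sigma> M zs = (\<Union>xt\<in>Z. (\<lambda>i. shift xt \<sigma> (zs xt i)) ` {..<M})"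
  by (auto simp: alg2_S_def)

lemma shift_in_alg2_S: "xt \<in> Z \<Longrightarrow> i < M \<Longrightarrow> shift xt \<sigma> (zs xt i) \<in> alg2_S Z \<sigma> M zs"
  by (auto simp: alg2_S_eq)

lemma finite_alg2_S: "finite Z \<Longrightarrow> finite (alg2_S Z \<sigma> M zs)"
  by (simp add: alg2_S_eq)

lemma card_alg2_S_le: "finite Z \<Longrightarrow> card (alg2_S Z \<sigma> M zs) \<le> card Z * M"
proof -
  assume "finite Z"
  then have "card (alg2_S Z \<sigma> M zs) \<le> (\<Sum>xt\<in>Z. card ((\<lambda>i. shift xt \<sigma> (zs xt i)) ` {..<M}))"
    unfolding alg2_S_eq by (rule card_UN_le)
  also have "\<dots> \<le> (\<Sum>xt\<in>Z. M)"
    by (intro sum_mono) (metis card_image_le card_lessThan finite_lessThan)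
  finally show ?thesis
    by simp
qed

lemma alg2_S_subset_Rd:
  assumes "Z \<subseteq> Rd d" "\<forall>xt\<in>Z. \<forall>i<M. zs xt i \<in> Rd d"
  shows "alg2_S Z \<sigma> M zs \<subseteq> Rd d"
  using assms by (auto simp: alg2_S_def Rd_def shift_def)

lemma alg2_mistake_le_loss:
  assumes M: "M \<ge> 1" and f: "\<forall>i<M. f (shift xt \<sigma> (zs xt i)) \<in> {-1, 1}" and y: "y \<in> {-1, 1}"
  shows "(if alg2_pred \<sigma> M zs f xt \<noteq> y then 1 else 0) \<le> alg2_loss \<sigma> M zs f xt y"
proof -
  define pos where "pos = (\<Sum>i<M. if f (shift xt \<sigma> (zs xt i)) = 1 then 1 else 0 :: real)"
  define err where "err = (\<Sum>i<M. if f (shift xt \<sigma> (zs xt i)) \<noteq> y then 1 else 0 :: real)"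
  have "err = (if y = 1 then real M - pos else pos)"
  proof (cases "y = 1")
    case True
    have "err + pos = (\<Sum>i<M. 1)"
      unfolding err_def pos_def sum.distrib[symmetric] True by (intro sum.cong) auto
    with True show ?thesis
      by simp
  next
    case False
    with y have "y = -1"
      by simp
    with f False show ?thesis
      unfolding err_def pos_def by (simp, intro sum.cong) auto
  qed
  moreover have "real M > 0"
    using M by simp
  ultimately show ?thesis
    using y by (auto simp: alg2_pred_def alg2_loss_def pos_def[symmetric] err_def[symmetric] field_simps)
qed

lemma gauss_prob_gt_of_margin:
  fixes h :: "(nat \<Rightarrow> real) \<Rightarrow> real"
  assumes \<sigma>: "\<sigma> > 0" and \<epsilon>: "0 < \<epsilon>" "\<epsilon> \<le> 1" and x: "x \<in> Rd d" and xt: "xt \<in> Rd d"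
    and near: "l2dist d x xt \<le> alg2_gamma \<sigma> \<epsilon>"
    and h_meas: "(\<lambda>z. h (ext d z)) \<in> borel_measurable (PiM {..<d} (\<lambda>_. borel))"
    and h_vals: "\<forall>p\<in>Rd d. h p \<in> {-1, 1}" and y: "y \<in> {-1, 1}"
    and margin: "y * gauss_exp d \<sigma> h x > \<epsilon>"
  shows "gauss_prob d \<sigma> h xt y > 1 / 2 + alg2_eps \<epsilon>"
proof -
  have "\<bar>gauss_exp d \<sigma> h x - gauss_exp d \<sigma> h xt\<bar> \<le> sqrt (exp ((l2dist d x xt / \<sigma>)\<^sup>2) - 1)"
    using h_vals by (intro gauss_exp_diff_le[OF \<sigma> x xt h_meas]) auto
  also have "\<dots> \<le> \<epsilon> / 2"
    using near by (intro sqrt_exp_sq_minus_1_le_half_eps[OF \<sigma> \<epsilon>]) (simp_all add: l2dist_def l2norm_def sum_nonneg)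
  finally have "y * gauss_exp d \<sigma> h xt > \<epsilon> / 2"
    using y margin by (auto simp: abs_if split: if_splits)
  then show ?thesis
    using gauss_exp_eq_gauss_prob[OF xt h_meas h_vals y] by (simp add: alg2_eps_def)
qed

lemma alg2_loss_restrict_eq_0:
  assumes M: "M \<ge> 1" and in_S: "\<forall>i<M. shift xt \<sigma> (zs xt i) \<in> S"
    and agree: "(1 / real M) * (\<Sum>i<M. if h (shift xt \<sigma> (zs xt i)) = y then 1 else 0) > 1 / 2"
  shows "alg2_loss \<sigma> M zs (restrict h S) xt y = 0"
proof -
  define agr where "agr = (\<Sum>i<M. if h (shift xt \<sigma> (zs xt i)) = y then 1 else 0 :: real)"
  define err where "err = (\<Sum>i<M. if restrict h S (shift xt \<sigma> (zs xt i)) \<noteq> y then 1 else 0 :: real)"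
  have "agr + err = (\<Sum>i<M. 1)"
    unfolding agr_def err_def sum.distrib[symmetric] using in_S by (intro sum.cong) auto
  then have "(1 / real M) * err < 1 / 2"
    using M agree by (simp add: agr_def[symmetric] field_simps)
  then show ?thesis
    by (simp add: alg2_loss_def err_def)
qed

lemma sum_alg2_loss_le_margin_errors:
  fixes h :: "(nat \<Rightarrow> real) \<Rightarrow> real" and T :: nat and x :: "nat \<Rightarrow> nat \<Rightarrow> real"
  assumes admissible: "alg2_setup d X \<sigma> \<epsilon> H Z \<phi> M zs" and X: "X \<subseteq> Rd d"
    and \<sigma>: "\<sigma> > 0" and \<epsilon>: "0 < \<epsilon>" "\<epsilon> \<le> 1" and h: "h \<in> H"
    and h_meas: "(\<lambda>z. h (ext d z)) \<in> borel_measurable (PiM {..<d} (\<lambda>_. borel))"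
    and h_vals: "\<forall>p\<in>Rd d. h p \<in> {-1, 1}" and xy: "\<forall>t<T. x t \<in> X \<and> y t \<in> {-1, 1}"
  shows "(\<Sum>t<T. alg2_loss \<sigma> M zs (restrict h (alg2_S Z \<sigma> M zs)) (\<phi> (x t)) (y t))
    \<le> real (card {t\<in>{..<T}. y t * gauss_exp d \<sigma> h (x t) \<le> \<epsilon>})"
proof -
  have "alg2_loss \<sigma> M zs (restrict h (alg2_S Z \<sigma> M zs)) (\<phi> (x t)) (y t)
      \<le> (if y t * gauss_exp d \<sigma> h (x t) \<le> \<epsilon> then 1 else 0)" if t: "t < T" for t
  proof (cases "y t * gauss_exp d \<sigma> h (x t) \<le> \<epsilon>")
    case False
    let ?xt = "\<phi> (x t)"
    have cover: "?xt \<in> Z" "l2dist d (x t) ?xt \<le> alg2_gamma \<sigma> \<epsilon>" "Z \<subseteq> X" "M \<ge> 1"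
      using admissible xy t by (auto simp: alg2_setup_def is_cover_def)
    have "gauss_prob d \<sigma> h ?xt (y t) > 1 / 2 + alg2_eps \<epsilon>"
      using xy t X cover False
      by (intro gauss_prob_gt_of_margin[OF \<sigma> \<epsilon> _ _ _ h_meas h_vals]) auto
    moreover have "\<bar>gauss_prob d \<sigma> h ?xt (y t)
        - (1 / real M) * (\<Sum>i<M. if h (shift ?xt \<sigma> (zs ?xt i)) = y t then 1 else 0)\<bar> \<le> alg2_eps \<epsilon>"
      using admissible cover(1) xy t h by (auto simp: alg2_setup_def)
    ultimately have "(1 / real M) * (\<Sum>i<M. if h (shift ?xt \<sigma> (zs ?xt i)) = y t then 1 else 0) > 1 / 2"
      by (simp only: abs_le_iff) linarith
    then have "alg2_loss \<sigma> M zs (restrict h (alg2_S Z \<sigma> M zs)) ?xt (y t) = 0"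
      using cover(1,4) shift_in_alg2_S by (intro alg2_loss_restrict_eq_0) auto
    with False show ?thesis
      by simp
  qed (simp add: alg2_loss_def)
  then have "(\<Sum>t<T. alg2_loss \<sigma> M zs (restrict h (alg2_S Z \<sigma> M zs)) (\<phi> (x t)) (y t))
      \<le> (\<Sum>t<T. if y t * gauss_exp d \<sigma> h (x t) \<le> \<epsilon> then 1 else 0)"
    by (intro sum_mono) simp
  also have "\<dots> = real (card {t\<in>{..<T}. y t * gauss_exp d \<sigma> h (x t) \<le> \<epsilon>})"
    unfolding real_of_card by (subst sum.inter_filter) auto
  finally show ?thesis .
qed

lemma alg2_mistake_le_loss_restr_class:
  assumes admissible: "alg2_setup d X \<sigma> \<epsilon> H Z \<phi> M zs" and X: "X \<subseteq> Rd d"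
    and H_vals: "\<forall>h\<in>H. \<forall>p\<in>Rd d. h p \<in> {-1, 1}" and x: "x \<in> X" and y: "y \<in> {-1, 1}"
    and g: "g \<in> restr_class H (alg2_S Z \<sigma> M zs)"
  shows "(if alg2_pred \<sigma> M zs g (\<phi> x) \<noteq> y then 1 else 0) \<le> alg2_loss \<sigma> M zs g (\<phi> x) y"
proof (rule alg2_mistake_le_loss[OF _ _ y])
  have Z: "\<phi> x \<in> Z" "Z \<subseteq> Rd d" "\<forall>xt\<in>Z. \<forall>i<M. zs xt i \<in> Rd d"
    using admissible X x by (auto simp: alg2_setup_def is_cover_def)
  from g obtain h where h: "h \<in> H" "g = restrict h (alg2_S Z \<sigma> M zs)"
    by (auto simp: restr_class_def)
  show "\<forall>i<M. g (shift (\<phi> x) \<sigma> (zs (\<phi> x) i)) \<in> {-1, 1}"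
  proof (intro allI impI)
    fix i assume "i < M"
    then have "shift (\<phi> x) \<sigma> (zs (\<phi> x) i) \<in> alg2_S Z \<sigma> M zs"
      using Z(1) by (rule shift_in_alg2_S[rotated])
    with alg2_S_subset_Rd[OF Z(2,3)] h H_vals show "g (shift (\<phi> x) \<sigma> (zs (\<phi> x) i)) \<in> {-1, 1}"
      by auto
  qed
  show "M \<ge> 1"
    using admissible by (simp add: alg2_setup_def)
qed

lemma opt_gauss_attained:
  assumes "H \<noteq> {}"
  obtains h where "h \<in> H"
    "opt_gauss d \<sigma> \<epsilon> H T x y = real (card {t\<in>{..<T}. y t * gauss_exp d \<sigma> h (x t) \<le> \<epsilon>})"
proof -
  let ?errors = "\<lambda>h. card {t\<in>{..<T}. y t * gauss_exp d \<sigma> h (x t) \<le> \<epsilon>}"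
  have "?errors h \<le> card {..<T}" for h
    by (rule card_mono) auto
  then have "?errors ` H \<subseteq> {..T}"
    by auto
  then have "finite (?errors ` H)"
    by (rule finite_subset) simp
  then have "Min (?errors ` H) \<in> ?errors ` H"
    using assms by (intro Min_in) auto
  then show ?thesis
    using that by (auto simp: opt_gauss_def)
qed

lemma alg2_expected_mistakes_le:
  fixes T :: nat and x :: "nat \<Rightarrow> nat \<Rightarrow> real"
  assumes admissible: "alg2_setup d X \<sigma> \<epsilon> H Z \<phi> M zs" and X: "X \<subseteq> Rd d"
    and \<sigma>: "\<sigma> > 0" and \<epsilon>: "0 < \<epsilon>" "\<epsilon> \<le> 1" and H: "H \<noteq> {}"
    and H_vals: "\<forall>h\<in>H. \<forall>p\<in>Rd d. h p \<in> {-1, 1}"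
    and H_meas: "\<forall>h\<in>H. (\<lambda>z. h (ext d z)) \<in> borel_measurable (PiM {..<d} (\<lambda>_. borel))"
    and vc: "finite_vc d H" and xy: "\<forall>t<T. x t \<in> X \<and> y t \<in> {-1, 1}"
  shows "alg2_expected_mistakes \<sigma> H Z \<phi> M zs T x y \<le>
    opt_gauss d \<sigma> \<epsilon> H T x y + sqrt (real T * ln (real (card (restr_class H (alg2_S Z \<sigma> M zs)))) / 2)"
proof -
  define S where "S = alg2_S Z \<sigma> M zs"
  define G where "G = restr_class H S"
  define \<eta> where "\<eta> = sqrt (8 * ln (real (card G)) / real T)"
  define L where "L t g = alg2_loss \<sigma> M zs g (\<phi> (x t)) (y t)" for t g
  have Z: "finite Z" "Z \<subseteq> Rd d" "\<forall>xt\<in>Z. \<forall>i<M. zs xt i \<in> Rd d"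
    using admissible X by (auto simp: alg2_setup_def is_cover_def)
  have S: "finite S" "S \<subseteq> Rd d"
    using Z by (simp_all add: S_def finite_alg2_S alg2_S_subset_Rd)
  have G: "finite G" "G \<noteq> {}"
    using card_restr_class_le(1)[OF S H_vals vc] H by (auto simp: G_def restr_class_def)
  obtain h where h: "h \<in> H"
    "opt_gauss d \<sigma> \<epsilon> H T x y = real (card {t\<in>{..<T}. y t * gauss_exp d \<sigma> h (x t) \<le> \<epsilon>})"
    using opt_gauss_attained[OF H] .
  have "alg2_expected_mistakes \<sigma> H Z \<phi> M zs T x y
      \<le> (\<Sum>t<T. \<Sum>g\<in>G. hedge G \<eta> L t g * L t g)"
    unfolding alg2_expected_mistakes_def Let_def S_def[symmetric] G_def[symmetric]
      \<eta>_def[symmetric] L_def[symmetric]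
    using xy alg2_mistake_le_loss_restr_class[OF admissible X H_vals]
    by (intro sum_mono mult_left_mono hedge_nonneg[OF G]) (auto simp: G_def S_def L_def)
  also have "\<dots> \<le> (\<Sum>t<T. L t (restrict h S)) + sqrt (real T * ln (real (card G)) / 2)"
  proof (cases "T = 0")
    case False
    then show ?thesis
      using h(1) by (intro hedge_regret[OF G _ _ _ \<eta>_def]) (auto simp: L_def alg2_loss_def G_def restr_class_def)
  qed simp
  also have "(\<Sum>t<T. L t (restrict h S)) \<le> opt_gauss d \<sigma> \<epsilon> H T x y"
    unfolding L_def S_def h(2) using H_vals H_meas h(1)
    by (intro sum_alg2_loss_le_margin_errors[OF admissible X \<sigma> \<epsilon> h(1) _ _ xy]) auto
  finally show ?thesis
    by (simp add: G_def S_def)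
qed

lemma ln_card_restr_class_alg2_S_le:
  fixes CM c :: real
  assumes admissible: "alg2_setup d X \<sigma> \<epsilon> H Z \<phi> M zs" and X: "X \<subseteq> Rd d"
    and \<epsilon>: "0 < \<epsilon>" "\<epsilon> \<le> 1" and H: "H \<noteq> {}" and H_vals: "\<forall>h\<in>H. \<forall>p\<in>Rd d. h p \<in> {-1, 1}"
    and vc: "finite_vc d H" and Z: "Z \<noteq> {}" and c: "1 \<le> c" "16 * CM \<le> c"
    and M_le: "real M \<le> CM * max 1 (real (vc_dim d H)) / (alg2_eps \<epsilon>)\<^sup>2"
  shows "ln (real (card (restr_class H (alg2_S Z \<sigma> M zs))))
    \<le> real (vc_dim d H) * ln (c * exp 1 * real (card Z) / \<epsilon>\<^sup>2)"
proof -
  define k where "k = real (vc_dim d H)"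
  define N where "N = real (card Z)"
  define r where "r = c * N * max 1 k / \<epsilon>\<^sup>2"
  have fin: "finite Z" "Z \<subseteq> Rd d" "\<forall>xt\<in>Z. \<forall>i<M. zs xt i \<in> Rd d"
    using admissible X by (auto simp: alg2_setup_def is_cover_def)
  then have "N \<ge> 1"
    using Z by (simp add: N_def Suc_le_eq card_gt_0_iff)
  have "\<epsilon>\<^sup>2 \<le> 1"
    using \<epsilon> by (simp add: power_le_one)
  then have "1 \<le> c * N / \<epsilon>\<^sup>2"
    using \<epsilon> c \<open>N \<ge> 1\<close> by (simp add: field_simps) (metis mult_mono' mult_1_right order.trans zero_le_one)
  then have "k \<le> r"
    unfolding r_def using mult_right_mono[of 1 "c * N / \<epsilon>\<^sup>2" "max 1 k"] by (simp add: k_def)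
  have "CM * 16 * max 1 k \<le> c * max 1 k"
    using c(2) by (intro mult_right_mono) auto
  then have "real M \<le> c * max 1 k / \<epsilon>\<^sup>2"
    using M_le \<epsilon> by (simp add: k_def alg2_eps_def power_divide field_simps)
  have "real (card (alg2_S Z \<sigma> M zs)) \<le> N * real M"
    unfolding N_def of_nat_mult[symmetric] of_nat_le_iff by (rule card_alg2_S_le[OF fin(1)])
  also have "\<dots> \<le> N * (c * max 1 k / \<epsilon>\<^sup>2)"
    using \<open>real M \<le> c * max 1 k / \<epsilon>\<^sup>2\<close> \<open>N \<ge> 1\<close> by (intro mult_left_mono) auto
  finally have "real (card (alg2_S Z \<sigma> M zs)) \<le> r"
    by (simp add: r_def mult_ac)
  then have "ln (real (card (restr_class H (alg2_S Z \<sigma> M zs)))) \<le> k * ln (exp 1 * r / k)"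
    unfolding k_def
    by (intro ln_card_restr_class_le[OF finite_alg2_S[OF fin(1)] alg2_S_subset_Rd[OF fin(2,3)] H_vals vc H])
      (use \<open>k \<le> r\<close> in \<open>simp_all add: k_def\<close>)
  also have "k * ln (exp 1 * r / k) = k * ln (c * exp 1 * N / \<epsilon>\<^sup>2)"
    by (cases "k = 0") (simp_all add: r_def k_def max_def mult_ac)
  finally show ?thesis
    by (simp add: k_def N_def)
qed

lemma alg2_regret_bound:
  fixes T :: nat and x :: "nat \<Rightarrow> nat \<Rightarrow> real" and CM c :: real
  assumes X: "X \<subseteq> Rd d" and \<sigma>: "0 < \<sigma>" and \<epsilon>: "0 < \<epsilon>" "\<epsilon> \<le> 1" and H: "H \<noteq> {}"
    and H_vals: "\<forall>h\<in>H. \<forall>p\<in>Rd d. h p \<in> {-1, 1}"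
    and H_meas: "\<forall>h\<in>H. (\<lambda>z. h (ext d z)) \<in> borel_measurable (PiM {..<d} (\<lambda>_. borel))"
    and vc: "finite_vc d H" and xy: "\<forall>t<T. x t \<in> X \<and> y t \<in> {-1, 1}"
    and admissible: "alg2_setup d X \<sigma> \<epsilon> H Z \<phi> M zs"
    and M_le: "real M \<le> CM * max 1 (real (vc_dim d H)) / (alg2_eps \<epsilon>)\<^sup>2"
    and c: "1 \<le> c" "16 * CM \<le> c"
  shows "alg2_expected_mistakes \<sigma> H Z \<phi> M zs T x y - opt_gauss d \<sigma> \<epsilon> H T x y
    \<le> sqrt (real T * real (vc_dim d H) *
        ln (c * exp 1 * real (covering_number d X (sqrt (pi / 32) * \<sigma> * \<epsilon>)) / \<epsilon>\<^sup>2))"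
proof -
  let ?lnG = "ln (real (card (restr_class H (alg2_S Z \<sigma> M zs))))"
  have "sqrt (real T * ?lnG / 2) \<le> sqrt (real T * real (vc_dim d H) * ln (c * exp 1 * real (card Z) / \<epsilon>\<^sup>2))"
  proof (cases "T = 0")
    case False
    then have "Z \<noteq> {}"
      using xy admissible by (auto simp: alg2_setup_def is_cover_def)
    then have "?lnG \<le> real (vc_dim d H) * ln (c * exp 1 * real (card Z) / \<epsilon>\<^sup>2)"
      by (rule ln_card_restr_class_alg2_S_le[OF admissible X \<epsilon> H H_vals vc _ c M_le])
    moreover have "?lnG \<ge> 0"
      by (cases "card (restr_class H (alg2_S Z \<sigma> M zs)) = 0") simp_all
    ultimately show ?thesis
      by (intro real_sqrt_le_mono) (simp add: mult.assoc mult_left_mono)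
  qed simp
  then show ?thesis
    unfolding covering_number_eq_card[OF admissible]
    using alg2_expected_mistakes_le[OF admissible X \<sigma> \<epsilon> H H_vals H_meas vc xy] by linarith
qed

theorem theorem6:
  shows "\<forall>CM::real. CM > 0 \<longrightarrow> (\<exists>c::real. c > 0 \<and>
    (\<forall>(d::nat) (X::(nat \<Rightarrow> real) set) (\<sigma>::real) (\<epsilon>::real) (H::((nat \<Rightarrow> real) \<Rightarrow> real) set)
       (T::nat) (x::nat \<Rightarrow> nat \<Rightarrow> real) (y::nat \<Rightarrow> real)
       (Z::(nat \<Rightarrow> real) set) (\<phi>::(nat \<Rightarrow> real) \<Rightarrow> (nat \<Rightarrow> real)) (M::nat)
       (zs::(nat \<Rightarrow> real) \<Rightarrow> nat \<Rightarrow> (nat \<Rightarrow> real)).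
      X \<subseteq> Rd d \<and> 0 < \<sigma> \<and> 0 < \<epsilon> \<and> \<epsilon> \<le> 1 \<and>
      H \<noteq> {} \<and> (\<forall>h\<in>H. \<forall>p\<in>Rd d. h p \<in> {-1, 1}) \<and>
      (\<forall>h\<in>H. (\<lambda>z. h (ext d z)) \<in> borel_measurable (PiM {..<d} (\<lambda>_. borel))) \<and>
      finite_vc d H \<and>
      (\<forall>t<T. x t \<in> X \<and> y t \<in> {-1, 1}) \<and>
      alg2_setup d X \<sigma> \<epsilon> H Z \<phi> M zs \<and>
      real M \<le> CM * max 1 (real (vc_dim d H)) / (alg2_eps \<epsilon>)\<^sup>2
      \<longrightarrow>
      alg2_expected_mistakes \<sigma> H Z \<phi> M zs T x y - opt_gauss d \<sigma> \<epsilon> H T x y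
        \<le> sqrt (real T * real (vc_dim d H) *
                ln (c * exp 1 * real (covering_number d X (sqrt (pi / 32) * \<sigma> * \<epsilon>)) / \<epsilon>\<^sup>2))))"
  \<comment> \<open>as 1 / (alg2_eps \<epsilon>)^2 = 16 / \<epsilon>^2, the constant 16 CM absorbs the sample size M\<close>
  apply (intro allI impI)
  subgoal for CM
    apply (rule exI[of _ "max 1 (16 * CM)"])
    apply (intro conjI allI impI)
     apply simp
    apply (elim conjE)
    apply (rule alg2_regret_bound; assumption?)
     apply simp_all
    done
  done

end
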